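(* Let $\mathbf{x}=(\mathbf{x}_1,\mathbf{x}_2,\mathbf{x}_3)$ have i.i.d. Bernoulli$(0.5)$ coordinates, and let $\mathbf{y}$ be distributed as follows: if $\mathbf{x}_3=1$, $\mathbf{y}=\mathbf{x}_1$ with probability $0.9$ and $1-\mathbf{x}_1$ otherwise; if $\mathbf{x}_3=0$, $\mathbf{y}=\mathbf{x}_2$ with probability $0.9$ and $1-\mathbf{x}_2$ otherwise. Let $e_{\mathrm{encode}}(\mathbf{x})=\xi_1=[1,0,0]$ if $\mathbf{x}_3=1$ and $\xi_2=[0,1,0]$ otherwise, and let $e_{\mathbf{c}}(\mathbf{x})=\xi_3=[0,0,1]$ for all $\mathbf{x}$. Then $\mathrm{EVAL\text{-}X}(q,e_{\mathrm{encode}})>\mathrm{EVAL\text{-}X}(q,e_{\mathbf{c}})$.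
   Context: $q$ denotes the joint distribution of $(\mathbf{y},\mathbf{x})$ just described. An explanation is a map $e$ from inputs to selection masks in $\{0,1\}^3$; $\mathbf{x}_{\mathbf{v}}$ denotes the values of the coordinates selected by $\mathbf{v}$, and $\mathbf{x}_{e(\mathbf{x})}=(\mathbf{v},\mathbf{a})$ is the pair of selection and selected values. The EVAL-X score is $\mathrm{EVAL\text{-}X}(q,e)=\mathbb{E}_{(\mathbf{v},\mathbf{a})\sim q(\mathbf{x}_{e(\mathbf{x})})}\mathbb{E}_{\mathbf{y}\sim q(\mathbf{y}\mid \mathbf{x}_{e(\mathbf{x})}=(\mathbf{v},\mathbf{a}))}[\log q(\mathbf{y}\mid \mathbf{x}_{\mathbf{v}}=\mathbf{a})]$. *)

theory Defs
  imports Complex_Main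
begin

(* Inputs x = (x1,x2,x3) in {0,1}^3, encoded as bool triples (True = 1). *)
type_synonym inp = "bool \<times> bool \<times> bool"
type_synonym mask = "bool \<times> bool \<times> bool"
(* Values of the selected coordinates: None for unselected coordinates. *)
type_synonym selv = "bool option \<times> bool option \<times> bool option"

definition x1 :: "inp \<Rightarrow> bool" where "x1 x = fst x"
definition x2 :: "inp \<Rightarrow> bool" where "x2 x = fst (snd x)"
definition x3 :: "inp \<Rightarrow> bool" where "x3 x = snd (snd x)"

definition sel :: "mask \<Rightarrow> inp \<Rightarrow> selv" where
  "sel v x = ((if fst v then Some (fst x) else None),
              (if fst (snd v) then Some (fst (snd x)) else None),
              (if snd (snd v) then Some (snd (snd x)) else None))"

definition bern :: "real \<Rightarrow> bool \<Rightarrow> real" where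
  "bern p b = (if b then p else 1 - p)"

definition q :: "bool \<Rightarrow> inp \<Rightarrow> real" where
  "q y x = bern 0.5 (x1 x) * bern 0.5 (x2 x) * bern 0.5 (x3 x) *
           (if x3 x then (if y = x1 x then 0.9 else 0.1)
                    else (if y = x2 x then 0.9 else 0.1))"

definition q_cond_sel :: "(bool \<Rightarrow> inp \<Rightarrow> real) \<Rightarrow> bool \<Rightarrow> mask \<Rightarrow> selv \<Rightarrow> real" where
  "q_cond_sel p y v a =
     (\<Sum>x\<in>{x. sel v x = a}. p y x) / (\<Sum>x\<in>{x. sel v x = a}. \<Sum>y'\<in>UNIV. p y' x)"

definition q_expl :: "(bool \<Rightarrow> inp \<Rightarrow> real) \<Rightarrow> (inp \<Rightarrow> mask) \<Rightarrow> mask \<Rightarrow> selv \<Rightarrow> real" where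
  "q_expl p e v a = (\<Sum>x\<in>{x. e x = v \<and> sel v x = a}. \<Sum>y\<in>UNIV. p y x)"

definition q_cond_expl :: "(bool \<Rightarrow> inp \<Rightarrow> real) \<Rightarrow> (inp \<Rightarrow> mask) \<Rightarrow> bool \<Rightarrow> mask \<Rightarrow> selv \<Rightarrow> real" where
  "q_cond_expl p e y v a =
     (\<Sum>x\<in>{x. e x = v \<and> sel v x = a}. p y x) / q_expl p e v a"

definition EVAL_X :: "(bool \<Rightarrow> inp \<Rightarrow> real) \<Rightarrow> (inp \<Rightarrow> mask) \<Rightarrow> real" where
  "EVAL_X p e =
     (\<Sum>(v,a)\<in>(\<lambda>x. (e x, sel (e x) x)) ` UNIV.
        q_expl p e v a * (\<Sum>y\<in>UNIV. q_cond_expl p e y v a * ln (q_cond_sel p y v a)))"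

definition xi1 :: mask where "xi1 = (True, False, False)"
definition xi2 :: mask where "xi2 = (False, True, False)"
definition xi3 :: mask where "xi3 = (False, False, True)"

definition e_encode :: "inp \<Rightarrow> mask" where
  "e_encode x = (if x3 x then xi1 else xi2)"

definition e_c :: "inp \<Rightarrow> mask" where
  "e_c x = xi3"

end

theory Submission
  imports Defs
begin

(* Under e_encode the selected coordinate (x1 when x3 = 1, x2 otherwise) agrees with y with
   probability 0.9 given the explanation, but the evaluator q(y | x_v = a) does not see x3 and only
   predicts y = a with probability 1/2 * 0.9 + 1/2 * 1/2 = 0.7. Hence
   EVAL-X(q, e_encode) = 0.9 ln 0.7 + 0.1 ln 0.3, about -0.44. The constant explanation reveals
   only x3, which is independent of y, so EVAL-X(q, e_c) = ln (1/2), about -0.69. *)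

lemma UNIV_inp:
  "(UNIV :: inp set) =
     {(True, True, True), (True, True, False), (True, False, True), (True, False, False),
      (False, True, True), (False, True, False), (False, False, True), (False, False, False)}"
  by auto

lemma sum_UNIV_inp:
  "(\<Sum>x\<in>(UNIV :: inp set). f x) =
     f (True, True, True) + f (True, True, False) + f (True, False, True) + f (True, False, False) +
     f (False, True, True) + f (False, True, False) + f (False, False, True) + f (False, False, False)"
  by (simp add: UNIV_inp add.assoc)

lemma sum_Collect_inp:
  "(\<Sum>x\<in>{x :: inp. P x}. f x) = (\<Sum>x\<in>UNIV. if P x then f x else 0)"
  by (simp add: sum.If_cases)

lemmas sum_inp_expand = sum_Collect_inp sum_UNIV_inp

lemma q_eq:
  "q y (a, b, c) =
     1/8 * (if c then (if y = a then 9/10 else 1/10) else (if y = b then 9/10 else 1/10))"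
  by (simp add: q_def bern_def x1_def x2_def x3_def)

lemma q_cond_sel_xi3: "q_cond_sel q y xi3 (None, None, Some c) = 1/2"
  unfolding q_cond_sel_def sum_inp_expand by (simp add: q_eq sel_def xi3_def UNIV_bool)

lemma q_cond_sel_xi1: "q_cond_sel q y xi1 (Some a, None, None) = (if y = a then 7/10 else 3/10)"
  unfolding q_cond_sel_def sum_inp_expand by (cases a) (simp_all add: q_eq sel_def xi1_def UNIV_bool)

lemma q_cond_sel_xi2: "q_cond_sel q y xi2 (None, Some a, None) = (if y = a then 7/10 else 3/10)"
  unfolding q_cond_sel_def sum_inp_expand by (cases a) (simp_all add: q_eq sel_def xi2_def UNIV_bool)

lemma q_expl_e_c: "q_expl q e_c xi3 (None, None, Some c) = 1/2"
  unfolding q_expl_def sum_inp_expand by (cases c) (simp_all add: q_eq sel_def e_c_def xi3_def UNIV_bool)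

lemma q_cond_expl_e_c: "q_cond_expl q e_c y xi3 (None, None, Some c) = 1/2"
  unfolding q_cond_expl_def q_expl_e_c sum_inp_expand
  by (cases c) (simp_all add: q_eq sel_def e_c_def xi3_def)

lemmas e_encode_simps = q_eq sel_def e_encode_def x3_def xi1_def xi2_def UNIV_bool

lemma q_expl_e_encode_xi1: "q_expl q e_encode xi1 (Some a, None, None) = 1/4"
  unfolding q_expl_def sum_inp_expand by (cases a) (simp_all add: e_encode_simps)

lemma q_expl_e_encode_xi2: "q_expl q e_encode xi2 (None, Some a, None) = 1/4"
  unfolding q_expl_def sum_inp_expand by (cases a) (simp_all add: e_encode_simps)

lemma q_cond_expl_e_encode_xi1:
  "q_cond_expl q e_encode y xi1 (Some a, None, None) = (if y = a then 9/10 else 1/10)"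
  unfolding q_cond_expl_def q_expl_e_encode_xi1 sum_inp_expand
  by (cases a; cases y) (simp_all add: e_encode_simps)

lemma q_cond_expl_e_encode_xi2:
  "q_cond_expl q e_encode y xi2 (None, Some a, None) = (if y = a then 9/10 else 1/10)"
  unfolding q_cond_expl_def q_expl_e_encode_xi2 sum_inp_expand
  by (cases a; cases y) (simp_all add: e_encode_simps)

lemma explanations_e_c:
  "(\<lambda>x. (e_c x, sel (e_c x) x)) ` UNIV =
     {(xi3, None, None, Some True), (xi3, None, None, Some False)}"
  by (auto simp: e_c_def sel_def xi3_def image_iff)

lemma explanations_e_encode:
  "(\<lambda>x. (e_encode x, sel (e_encode x) x)) ` UNIV =
     {(xi1, Some True, None, None), (xi1, Some False, None, None),
      (xi2, None, Some True, None), (xi2, None, Some False, None)}"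
  unfolding UNIV_inp by (simp add: e_encode_def sel_def xi1_def xi2_def x3_def insert_commute)

lemma EVAL_X_e_c: "EVAL_X q e_c = ln (1/2)"
  unfolding EVAL_X_def explanations_e_c
  by (simp add: q_expl_e_c q_cond_expl_e_c q_cond_sel_xi3 UNIV_bool)

lemma EVAL_X_e_encode: "EVAL_X q e_encode = 9/10 * ln (7/10) + 1/10 * ln (3/10)"
proof -
  have "xi1 \<noteq> xi2"
    by (simp add: xi1_def xi2_def)
  then show ?thesis
    unfolding EVAL_X_def explanations_e_encode
    by (simp add: q_expl_e_encode_xi1 q_expl_e_encode_xi2 q_cond_expl_e_encode_xi1
        q_cond_expl_e_encode_xi2 q_cond_sel_xi1 q_cond_sel_xi2 UNIV_bool field_simps)
qed

lemma ln_half_less: "ln (1/2 :: real) < 9/10 * ln (7/10) + 1/10 * ln (3/10)"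
proof -
  have "10 * ln (1/2 :: real) = ln ((1/2)^10)"
    by (simp add: ln_realpow)
  also have "\<dots> < ln ((7/10)^9 * (3/10))"
    by (subst ln_less_cancel_iff) (simp_all add: power_numeral_reduce)
  also have "\<dots> = 9 * ln (7/10) + ln (3/10)"
    using ln_mult[of "(7/10 :: real)^9" "3/10"] by (simp add: ln_realpow)
  finally show ?thesis
    by simp
qed

theorem proposition2:
  shows "EVAL_X q e_encode > EVAL_X q e_c"
  using ln_half_less by (simp only: EVAL_X_e_encode EVAL_X_e_c)

end
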